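(* Let $\mathcal{P}_1,\dots,\mathcal{P}_k$ be finite posets with $p_j=|\mathcal{P}_j|$ and assume that $\mathcal{C}(\mathcal{P}_j)$ is simplicial for every $j=1,\dots,k$. For each $j$ let $\mathbf{A}^{(j)}\in\mathrm{GL}(p_j)$ be an invertible linear map with $\mathbf{A}^{(j)}(\mathcal{C}(\mathcal{P}_j))=\mathbb{R}^{p_j}_+$. If $\mathbf{T}\in\mathcal{N}_{<\infty}$, then $\mathrm{NDrank}(\mathbf{T})=\mathrm{rank}_+\big((\otimes_{j=1}^k\mathbf{A}^{(j)})(\mathbf{T})\big)$.
   Context: For a finite poset $\mathcal{Q}$, the order cone $\mathcal{C}(\mathcal{Q})\subset\mathbb{R}^{\mathcal{Q}}$ is the set of functions $\mathbf{f}$ on $\mathcal{Q}$ with $f_x\ge0$ for all $x$ and $f_x\le f_y$ whenever $x\preceq y$. A cone in $\mathbb{R}^p$ is simplicial if it is the conical hull of $p$ linearly independent vectors. Tensors are elements of $\mathbb{R}^{\mathcal{P}_1\times\cdots\times\mathcal{P}_k}=\otimes_j\mathbb{R}^{p_j}$, with the product poset ordered componentwise. The nondecreasing rank $\mathrm{NDrank}(\mathbf{T})$ is the minimal $r$ such that $\mathbf{T}=\sum_{i=1}^r\otimes_{j=1}^k\mathbf{v}^{(ij)}$ with all $\mathbf{v}^{(ij)}\in\mathcal{C}(\mathcal{P}_j)$ ($\infty$ if no such decomposition exists), and $\mathcal{N}_{<\infty}$ is the set of tensors of finite nondecreasing rank. $\mathrm{rank}_+(\mathbf{S})$ is the minimal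 $r$ such that $\mathbf{S}=\sum_{i=1}^r\otimes_j\mathbf{v}^{(ij)}$ with all $\mathbf{v}^{(ij)}$ entrywise nonnegative. The linear map $\otimes_j\mathbf{A}^{(j)}$ is defined in coordinates by $[(\otimes_j\mathbf{A}^{(j)})(\mathbf{T})]_{j_1\dots j_k}=\sum_{i_1,\dots,i_k}A^{(1)}_{j_1i_1}\cdots A^{(k)}_{j_ki_k}T_{i_1\dots i_k}$. *)

theory Defs
  imports "HOL-Analysis.Analysis" "HOL-Library.Extended_Nat"
begin

text \<open>Vectors in R^S (S a finite carrier) are functions vanishing outside S.\<close>
definition vecs :: "'a set \<Rightarrow> ('a \<Rightarrow> real) set" where
  "vecs S = {f. \<forall>x. x \<notin> S \<longrightarrow> f x = 0}"

definition is_poset :: "'a set \<Rightarrow> ('a \<Rightarrow> 'a \<Rightarrow> bool) \<Rightarrow> bool" where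
  "is_poset S le \<longleftrightarrow> finite S \<and> (\<forall>x\<in>S. le x x)
     \<and> (\<forall>x\<in>S. \<forall>y\<in>S. le x y \<and> le y x \<longrightarrow> x = y)
     \<and> (\<forall>x\<in>S. \<forall>y\<in>S. \<forall>z\<in>S. le x y \<and> le y z \<longrightarrow> le x z)"

definition order_cone :: "'a set \<Rightarrow> ('a \<Rightarrow> 'a \<Rightarrow> bool) \<Rightarrow> ('a \<Rightarrow> real) set" where
  "order_cone S le = {f \<in> vecs S. (\<forall>x\<in>S. 0 \<le> f x) \<and> (\<forall>x\<in>S. \<forall>y\<in>S. le x y \<longrightarrow> f x \<le> f y)}"

definition nonneg_orthant :: "'a set \<Rightarrow> ('a \<Rightarrow> real) set" where
  "nonneg_orthant S = {f \<in> vecs S. \<forall>x\<in>S. 0 \<le> f x}"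

definition lin_indep_vecs :: "('a \<Rightarrow> real) set \<Rightarrow> bool" where
  "lin_indep_vecs V \<longleftrightarrow> (\<forall>c. (\<forall>x. (\<Sum>v\<in>V. c v * v x) = 0) \<longrightarrow> (\<forall>v\<in>V. c v = 0))"

definition simplicial :: "'a set \<Rightarrow> ('a \<Rightarrow> real) set \<Rightarrow> bool" where
  "simplicial S C \<longleftrightarrow> (\<exists>V. V \<subseteq> vecs S \<and> finite V \<and> card V = card S \<and> lin_indep_vecs V
      \<and> C = {(\<lambda>x. \<Sum>v\<in>V. c v * v x) | c. \<forall>v\<in>V. 0 \<le> c v})"

definition mat_map :: "'a set \<Rightarrow> ('a \<Rightarrow> 'a \<Rightarrow> real) \<Rightarrow> ('a \<Rightarrow> real) \<Rightarrow> ('a \<Rightarrow> real)" where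
  "mat_map S A f = (\<lambda>y. if y \<in> S then (\<Sum>x\<in>S. A y x * f x) else 0)"

definition tidx :: "nat \<Rightarrow> (nat \<Rightarrow> 'a set) \<Rightarrow> (nat \<Rightarrow> 'a) set" where
  "tidx k P = PiE {..<k} P"

definition outer :: "nat \<Rightarrow> (nat \<Rightarrow> 'a \<Rightarrow> real) \<Rightarrow> (nat \<Rightarrow> 'a) \<Rightarrow> real" where
  "outer k v = (\<lambda>i. \<Prod>j<k. v j (i j))"

definition decomp :: "nat \<Rightarrow> (nat \<Rightarrow> 'a set) \<Rightarrow> (nat \<Rightarrow> ('a \<Rightarrow> real) set)
     \<Rightarrow> ((nat \<Rightarrow> 'a) \<Rightarrow> real) \<Rightarrow> nat \<Rightarrow> bool" where
  "decomp k P K T r \<longleftrightarrow> (\<exists>v :: nat \<Rightarrow> nat \<Rightarrow> 'a \<Rightarrow> real.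
      (\<forall>i<r. \<forall>j<k. v i j \<in> K j) \<and>
      (\<forall>idx\<in>tidx k P. T idx = (\<Sum>i<r. outer k (v i) idx)))"

definition NDrank :: "nat \<Rightarrow> (nat \<Rightarrow> 'a set) \<Rightarrow> (nat \<Rightarrow> 'a \<Rightarrow> 'a \<Rightarrow> bool)
     \<Rightarrow> ((nat \<Rightarrow> 'a) \<Rightarrow> real) \<Rightarrow> enat" where
  "NDrank k P le T = Inf {enat r | r. decomp k P (\<lambda>j. order_cone (P j) (le j)) T r}"

definition finite_NDrank :: "nat \<Rightarrow> (nat \<Rightarrow> 'a set) \<Rightarrow> (nat \<Rightarrow> 'a \<Rightarrow> 'a \<Rightarrow> bool)
     \<Rightarrow> ((nat \<Rightarrow> 'a) \<Rightarrow> real) \<Rightarrow> bool" where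
  "finite_NDrank k P le T \<longleftrightarrow> (\<exists>r. decomp k P (\<lambda>j. order_cone (P j) (le j)) T r)"

definition nnrank :: "nat \<Rightarrow> (nat \<Rightarrow> 'a set) \<Rightarrow> ((nat \<Rightarrow> 'a) \<Rightarrow> real) \<Rightarrow> enat" where
  "nnrank k P S = Inf {enat r | r. decomp k P (\<lambda>j. nonneg_orthant (P j)) S r}"

definition tensor_map :: "nat \<Rightarrow> (nat \<Rightarrow> 'a set) \<Rightarrow> (nat \<Rightarrow> 'a \<Rightarrow> 'a \<Rightarrow> real)
     \<Rightarrow> ((nat \<Rightarrow> 'a) \<Rightarrow> real) \<Rightarrow> ((nat \<Rightarrow> 'a) \<Rightarrow> real)" where
  "tensor_map k P A T = (\<lambda>jdx. if jdx \<in> tidx k P then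
      (\<Sum>idx\<in>tidx k P. (\<Prod>j<k. A j (jdx j) (idx j)) * T idx) else 0)"

end

theory Submission
  imports Defs
begin

text \<open>
  Each \<open>A j\<close> maps the order cone of \<open>P j\<close> bijectively onto the nonnegative orthant, and
  \<open>tensor_map\<close> sends the outer product of vectors \<open>v j\<close> to the outer product of the
  \<open>A j v j\<close>. So decompositions of \<open>T\<close> into \<open>r\<close> outer products of nondecreasing vectors are
  carried by the \<open>A j\<close>, and back by their inverse matrices, to decompositions of the image of
  \<open>T\<close> into \<open>r\<close> outer products of nonnegative vectors: both ranks are infima of the same set.
\<close>

lemma finite_tidx:
  assumes "\<And>j. j < k \<Longrightarrow> finite (P j)"
  shows "finite (tidx k P)"
  using assms unfolding tidx_def by (intro finite_PiE) auto

lemma decomp_cong: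
  assumes "\<And>idx. idx \<in> tidx k P \<Longrightarrow> T idx = T' idx"
  shows "decomp k P K T r \<longleftrightarrow> decomp k P K T' r"
  using assms unfolding decomp_def by auto

lemma mat_map_in_vecs: "mat_map S A f \<in> vecs S"
  unfolding mat_map_def vecs_def by simp

lemma mat_map_mat_map:
  "mat_map S B (mat_map S A f) = mat_map S (\<lambda>l x. \<Sum>y\<in>S. B l y * A y x) f"
proof
  fix l
  have "(\<Sum>y\<in>S. B l y * (\<Sum>x\<in>S. A y x * f x)) = (\<Sum>x\<in>S. (\<Sum>y\<in>S. B l y * A y x) * f x)"
    unfolding sum_distrib_left sum_distrib_right mult.assoc by (rule sum.swap)
  then show "mat_map S B (mat_map S A f) l = mat_map S (\<lambda>l x. \<Sum>y\<in>S. B l y * A y x) f l"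
    by (simp add: mat_map_def)
qed

lemma mat_map_id:
  assumes "finite S" and "\<And>l x. l \<in> S \<Longrightarrow> x \<in> S \<Longrightarrow> C l x = (if l = x then 1 else 0)"
    and "f \<in> vecs S"
  shows "mat_map S C f = f"
proof
  fix l
  have "(\<Sum>x\<in>S. C l x * f x) = (\<Sum>x\<in>S. if l = x then f x else 0)" if "l \<in> S"
    using that by (intro sum.cong) (simp_all add: assms(2))
  then have "(\<Sum>x\<in>S. C l x * f x) = f l" if "l \<in> S"
    using assms(1) that by simp
  then show "mat_map S C f l = f l"
    using assms(3) by (auto simp: mat_map_def vecs_def)
qed

lemma bij_mat_map_left_inverse:
  assumes finS: "finite S" and bij: "bij_betw (mat_map S A) (vecs S) (vecs S)"
  shows "\<exists>B. \<forall>l\<in>S. \<forall>x\<in>S. (\<Sum>y\<in>S. B l y * A y x) = (if l = x then 1 else 0)"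
proof -
  let ?M = "mat_map S A" and ?N = "inv_into (vecs S) (mat_map S A)"
  define e where "e x = (\<lambda>y. if y = x then 1 else 0 :: real)" for x :: 'a
  \<comment> \<open>The inverse of \<open>?M\<close> is linear, hence given by the matrix whose columns are the
    preimages of the unit vectors.\<close>
  define B where "B l x = ?N (e x) l" for l x
  have e_vecs: "e x \<in> vecs S" if "x \<in> S" for x
    using that by (simp add: e_def vecs_def)
  have mat_map_e: "mat_map S C (e x) l = C l x" if "l \<in> S" "x \<in> S" for C l x
  proof -
    have "(\<Sum>y\<in>S. C l y * e x y) = (\<Sum>y\<in>S. if y = x then C l y else 0)"
      by (intro sum.cong) (simp_all add: e_def)
    then show ?thesis
      using that finS by (simp add: mat_map_def)
  qed
  have N_eq: "?N w = mat_map S B w" if w: "w \<in> vecs S" for w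
  proof -
    have "(\<Sum>z\<in>S. A y z * B z x) = e x y" if "y \<in> S" "x \<in> S" for y x
    proof -
      have "(\<Sum>z\<in>S. A y z * B z x) = ?M (?N (e x)) y"
        using that by (simp add: mat_map_def B_def)
      also have "\<dots> = e x y"
        using bij e_vecs that by (simp add: bij_betw_inv_into_right)
      finally show ?thesis .
    qed
    then have "?M (mat_map S B w) = w"
      using finS w by (simp add: mat_map_mat_map mat_map_id e_def)
    then have "?N (?M (mat_map S B w)) = ?N w" by simp
    then show ?thesis
      using bij mat_map_in_vecs by (metis bij_betw_inv_into_left)
  qed
  have "(\<Sum>y\<in>S. B l y * A y x) = (if l = x then 1 else 0)" if "l \<in> S" "x \<in> S" for l x
  proof -
    have "(\<Sum>y\<in>S. B l y * A y x) = mat_map S B (?M (e x)) l"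
      using that by (simp add: mat_map_mat_map mat_map_e)
    also have "\<dots> = ?N (?M (e x)) l"
      using N_eq mat_map_in_vecs by metis
    also have "\<dots> = e x l"
      using bij e_vecs that by (simp add: bij_betw_inv_into_left)
    finally show ?thesis by (simp add: e_def)
  qed
  then show ?thesis by blast
qed

lemma tensor_map_sum_outer:
  assumes finP: "\<And>j. j < k \<Longrightarrow> finite (P j)"
    and T: "\<forall>idx\<in>tidx k P. T idx = (\<Sum>i<r. outer k (v i) idx)"
    and jdx: "jdx \<in> tidx k P"
  shows "tensor_map k P A T jdx = (\<Sum>i<r. outer k (\<lambda>j. mat_map (P j) (A j) (v i j)) jdx)"
proof -
  have "tensor_map k P A T jdx
      = (\<Sum>idx\<in>tidx k P. (\<Prod>j<k. A j (jdx j) (idx j)) * (\<Sum>i<r. outer k (v i) idx))"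
    unfolding tensor_map_def using jdx T by (auto intro!: sum.cong)
  also have "\<dots> = (\<Sum>i<r. \<Sum>idx\<in>tidx k P. \<Prod>j<k. A j (jdx j) (idx j) * v i j (idx j))"
    by (simp add: sum_distrib_left outer_def prod.distrib sum.swap[where A="tidx k P"])
  also have "\<dots> = (\<Sum>i<r. \<Prod>j<k. \<Sum>x\<in>P j. A j (jdx j) x * v i j x)"
    unfolding tidx_def using finP by (intro sum.cong refl, subst prod_sum_PiE) auto
  also have "\<dots> = (\<Sum>i<r. outer k (\<lambda>j. mat_map (P j) (A j) (v i j)) jdx)"
    using jdx unfolding outer_def mat_map_def tidx_def by (simp add: PiE_iff)
  finally show ?thesis .
qed

lemma tensor_map_tensor_map:
  assumes finP: "\<And>j. j < k \<Longrightarrow> finite (P j)" and l: "l \<in> tidx k P"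
  shows "tensor_map k P B (tensor_map k P A T) l
       = tensor_map k P (\<lambda>j l x. \<Sum>y\<in>P j. B j l y * A j y x) T l"
proof -
  have "tensor_map k P B (tensor_map k P A T) l = (\<Sum>m\<in>tidx k P.
      (\<Prod>j<k. B j (l j) (m j)) * (\<Sum>idx\<in>tidx k P. (\<Prod>j<k. A j (m j) (idx j)) * T idx))"
    unfolding tensor_map_def using l by (auto intro!: sum.cong)
  also have "\<dots> = (\<Sum>m\<in>tidx k P. \<Sum>idx\<in>tidx k P.
      (\<Prod>j<k. B j (l j) (m j) * A j (m j) (idx j)) * T idx)"
    by (simp add: sum_distrib_left prod.distrib mult_ac)
  also have "\<dots> = (\<Sum>idx\<in>tidx k P.
      (\<Sum>m\<in>tidx k P. \<Prod>j<k. B j (l j) (m j) * A j (m j) (idx j)) * T idx)"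
    by (subst sum.swap) (simp add: sum_distrib_right)
  also have "\<dots> = (\<Sum>idx\<in>tidx k P.
      (\<Prod>j<k. \<Sum>y\<in>P j. B j (l j) y * A j y (idx j)) * T idx)"
    unfolding tidx_def using finP by (intro sum.cong refl arg_cong2[where f="(*)"], subst prod_sum_PiE) auto
  finally show ?thesis
    using l by (simp add: tensor_map_def)
qed

lemma tensor_map_id:
  assumes C: "\<And>j l x. j < k \<Longrightarrow> l \<in> P j \<Longrightarrow> x \<in> P j \<Longrightarrow> C j l x = (if l = x then 1 else 0)"
    and finP: "\<And>j. j < k \<Longrightarrow> finite (P j)" and l: "l \<in> tidx k P"
  shows "tensor_map k P C T l = T l"
proof -
  have "(\<Prod>j<k. C j (l j) (idx j)) = (if idx = l then 1 else 0)" if idx: "idx \<in> tidx k P" for idx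
  proof (cases "idx = l")
    case True
    then show ?thesis
      using l C by (simp add: tidx_def PiE_iff)
  next
    case False
    then obtain j where "j < k" "l j \<noteq> idx j"
      using idx l unfolding tidx_def by (metis PiE_ext lessThan_iff)
    moreover have "l j \<in> P j" "idx j \<in> P j"
      using \<open>j < k\<close> idx l unfolding tidx_def by auto
    ultimately have "C j (l j) (idx j) = 0"
      using C by simp
    then show ?thesis
      using False \<open>j < k\<close> by (auto simp: prod_zero_iff)
  qed
  then have "tensor_map k P C T l = (\<Sum>idx\<in>tidx k P. if idx = l then T idx else 0)"
    using l unfolding tensor_map_def by (auto intro!: sum.cong)
  then show ?thesis
    using finite_tidx[OF finP] l by simp
qed

lemma decomp_tensor_map:
  assumes finP: "\<And>j. j < k \<Longrightarrow> finite (P j)"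
    and maps: "\<And>j. j < k \<Longrightarrow> mat_map (P j) (A j) ` K j \<subseteq> L j"
    and "decomp k P K T r"
  shows "decomp k P L (tensor_map k P A T) r"
proof -
  obtain v where v: "\<forall>i<r. \<forall>j<k. v i j \<in> K j"
    and T: "\<forall>idx\<in>tidx k P. T idx = (\<Sum>i<r. outer k (v i) idx)"
    using assms(3) unfolding decomp_def by blast
  show ?thesis
    unfolding decomp_def
  proof (intro exI[of _ "\<lambda>i j. mat_map (P j) (A j) (v i j)"] conjI)
    show "\<forall>i<r. \<forall>j<k. mat_map (P j) (A j) (v i j) \<in> L j"
      using v maps by blast
    show "\<forall>jdx\<in>tidx k P.
        tensor_map k P A T jdx = (\<Sum>i<r. outer k (\<lambda>j. mat_map (P j) (A j) (v i j)) jdx)"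
      using tensor_map_sum_outer[where k=k and P=P and A=A, OF finP T] by blast
  qed
qed

lemma decomp_tensor_map_iff:
  assumes finP: "\<And>j. j < k \<Longrightarrow> finite (P j)"
    and bij: "\<And>j. j < k \<Longrightarrow> bij_betw (mat_map (P j) (A j)) (vecs (P j)) (vecs (P j))"
    and cone: "\<And>j. j < k \<Longrightarrow> K j \<subseteq> vecs (P j)"
    and maps: "\<And>j. j < k \<Longrightarrow> mat_map (P j) (A j) ` K j = L j"
  shows "decomp k P K T r \<longleftrightarrow> decomp k P L (tensor_map k P A T) r"
proof
  assume decomp_K: "decomp k P K T r"
  have "mat_map (P j) (A j) ` K j \<subseteq> L j" if "j < k" for j
    using maps[OF that] by simp
  then show "decomp k P L (tensor_map k P A T) r"
    using decomp_tensor_map[where k=k and P=P, OF finP _ decomp_K] by blast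
next
  assume decomp_L: "decomp k P L (tensor_map k P A T) r"
  define B where "B j = (SOME Bj. \<forall>l\<in>P j. \<forall>x\<in>P j.
      (\<Sum>y\<in>P j. Bj l y * A j y x) = (if l = x then 1 else 0))" for j
  have B: "(\<Sum>y\<in>P j. B j l y * A j y x) = (if l = x then 1 else 0)"
    if "j < k" "l \<in> P j" "x \<in> P j" for j l x
  proof -
    have "\<forall>l\<in>P j. \<forall>x\<in>P j. (\<Sum>y\<in>P j. B j l y * A j y x) = (if l = x then 1 else 0)"
      unfolding B_def
      by (rule someI_ex[OF bij_mat_map_left_inverse[OF finP[OF that(1)] bij[OF that(1)]]])
    then show ?thesis
      using that by blast
  qed
  have "mat_map (P j) (B j) ` L j \<subseteq> K j" if j: "j < k" for j
  proof
    fix w assume "w \<in> mat_map (P j) (B j) ` L j"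
    then obtain c where c: "c \<in> K j" and w: "w = mat_map (P j) (B j) (mat_map (P j) (A j) c)"
      by (auto simp flip: maps[OF j])
    have "c \<in> vecs (P j)"
      using c cone[OF j] by blast
    with finP[OF j] B[OF j] have "mat_map (P j) (B j) (mat_map (P j) (A j) c) = c"
      unfolding mat_map_mat_map by (rule mat_map_id)
    then show "w \<in> K j"
      using c w by simp
  qed
  then have "decomp k P K (tensor_map k P B (tensor_map k P A T)) r"
    using decomp_tensor_map[where k=k and P=P and A=B and K=L and L=K, OF finP _ decomp_L] by blast
  moreover have "tensor_map k P B (tensor_map k P A T) idx = T idx" if "idx \<in> tidx k P" for idx
  proof -
    have "tensor_map k P B (tensor_map k P A T) idx
        = tensor_map k P (\<lambda>j l x. \<Sum>y\<in>P j. B j l y * A j y x) T idx"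
      using finP that by (rule tensor_map_tensor_map)
    also have "\<dots> = T idx"
      using B finP that by (rule tensor_map_id)
    finally show ?thesis .
  qed
  ultimately show "decomp k P K T r"
    using decomp_cong[where k=k and P=P and T'=T] by blast
qed

theorem theorem4:
  fixes k :: nat
    and P :: "nat \<Rightarrow> 'a set"
    and le :: "nat \<Rightarrow> 'a \<Rightarrow> 'a \<Rightarrow> bool"
    and A :: "nat \<Rightarrow> 'a \<Rightarrow> 'a \<Rightarrow> real"
    and T :: "(nat \<Rightarrow> 'a) \<Rightarrow> real"
  assumes posets: "\<And>j. j < k \<Longrightarrow> is_poset (P j) (le j)"
    and simpl: "\<And>j. j < k \<Longrightarrow> simplicial (P j) (order_cone (P j) (le j))"
    and invertible: "\<And>j. j < k \<Longrightarrow> bij_betw (mat_map (P j) (A j)) (vecs (P j)) (vecs (P j))"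
    and maps_cone: "\<And>j. j < k \<Longrightarrow>
        mat_map (P j) (A j) ` order_cone (P j) (le j) = nonneg_orthant (P j)"
    and fin: "finite_NDrank k P le T"
  shows "NDrank k P le T = nnrank k P (tensor_map k P A T)"
proof -
  have finP: "\<And>j. j < k \<Longrightarrow> finite (P j)"
    using posets unfolding is_poset_def by blast
  have cone: "order_cone (P j) (le j) \<subseteq> vecs (P j)" for j
    unfolding order_cone_def by blast
  have "decomp k P (\<lambda>j. order_cone (P j) (le j)) T r
      \<longleftrightarrow> decomp k P (\<lambda>j. nonneg_orthant (P j)) (tensor_map k P A T) r" for r
    by (rule decomp_tensor_map_iff[where K="\<lambda>j. order_cone (P j) (le j)",
          OF finP invertible cone maps_cone])
  then show ?thesis
    unfolding NDrank_def nnrank_def by simp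
qed

end
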